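(* Let $n \ge 5$. (a) Let $S, S'$ be sets of transpositions in the symmetric group $S_n$, each generating $S_n$. Then the Cayley graphs $\mathrm{Cay}(S_n,S)$ and $\mathrm{Cay}(S_n,S')$ are isomorphic if and only if the transposition graphs $T(S)$ and $T(S')$ are isomorphic. (b) Let $S$ be a set of transpositions generating $S_n$. Then the Cayley graph $\mathrm{Cay}(S_n,S)$ is edge-transitive if and only if the transposition graph $T(S)$ is edge-transitive.
   Context: For a group $H$ and a subset $S \subseteq H$ with $1 \notin S$ and $S = S^{-1}$, the Cayley graph $\mathrm{Cay}(H,S)$ is the simple undirected graph with vertex set $H$ and edge set $\{\{h, sh\} : h \in H, s \in S\}$. For a set $S$ of transpositions in $S_n$, the transposition graph $T(S)$ is the simple graph with vertex set $\{1,\ldots,n\}$ in which $i$ and $j$ are adjacent if and only if $(i,j) \in S$. A graph $X$ is edge-transitive if for any two edges $\{u,v\},\{x,y\}$ of $X$ there is an automorphism $g$ of $X$ with $\{u^g, v^g\} = \{x,y\}$. *)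

theory Defs
  imports "HOL-Combinatorics.Combinatorics"
begin

text \<open>Simple graphs are given by a vertex set V and a symmetric, irreflexive
adjacency predicate (on V).\<close>

definition graph_iso :: "'a set \<Rightarrow> ('a \<Rightarrow> 'a \<Rightarrow> bool) \<Rightarrow> 'b set \<Rightarrow> ('b \<Rightarrow> 'b \<Rightarrow> bool) \<Rightarrow> bool" where
  "graph_iso V E V' E' \<longleftrightarrow>
     (\<exists>f. bij_betw f V V' \<and> (\<forall>x\<in>V. \<forall>y\<in>V. E x y \<longleftrightarrow> E' (f x) (f y)))"

definition graph_aut :: "'a set \<Rightarrow> ('a \<Rightarrow> 'a \<Rightarrow> bool) \<Rightarrow> ('a \<Rightarrow> 'a) \<Rightarrow> bool" where
  "graph_aut V E g \<longleftrightarrow> bij_betw g V V \<and> (\<forall>x\<in>V. \<forall>y\<in>V. E x y \<longleftrightarrow> E (g x) (g y))"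

definition edge_transitive :: "'a set \<Rightarrow> ('a \<Rightarrow> 'a \<Rightarrow> bool) \<Rightarrow> bool" where
  "edge_transitive V E \<longleftrightarrow>
     (\<forall>u\<in>V. \<forall>v\<in>V. \<forall>x\<in>V. \<forall>y\<in>V. E u v \<longrightarrow> E x y \<longrightarrow>
        (\<exists>g. graph_aut V E g \<and> {g u, g v} = {x, y}))"

definition Sym :: "nat \<Rightarrow> (nat \<Rightarrow> nat) set" where
  "Sym n = {p. p permutes {1..n}}"

definition is_transposition :: "nat \<Rightarrow> (nat \<Rightarrow> nat) \<Rightarrow> bool" where
  "is_transposition n s \<longleftrightarrow> (\<exists>i\<in>{1..n}. \<exists>j\<in>{1..n}. i \<noteq> j \<and> s = transpose i j)"

inductive_set generated :: "(nat \<Rightarrow> nat) set \<Rightarrow> (nat \<Rightarrow> nat) set" for S where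
  gen_id: "id \<in> generated S"
| gen_mult: "s \<in> S \<Longrightarrow> g \<in> generated S \<Longrightarrow> s \<circ> g \<in> generated S"
| gen_inv_mult: "s \<in> S \<Longrightarrow> g \<in> generated S \<Longrightarrow> inv s \<circ> g \<in> generated S"

definition generates_Sym :: "nat \<Rightarrow> (nat \<Rightarrow> nat) set \<Rightarrow> bool" where
  "generates_Sym n S \<longleftrightarrow> generated S = Sym n"

definition cay_adj :: "(nat \<Rightarrow> nat) set \<Rightarrow> (nat \<Rightarrow> nat) \<Rightarrow> (nat \<Rightarrow> nat) \<Rightarrow> bool" where
  "cay_adj S g h \<longleftrightarrow> (\<exists>s\<in>S. h = s \<circ> g)"

definition trans_adj :: "(nat \<Rightarrow> nat) set \<Rightarrow> nat \<Rightarrow> nat \<Rightarrow> bool" where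
  "trans_adj S i j \<longleftrightarrow> i \<noteq> j \<and> transpose i j \<in> S"

end

theory Submission
  imports Defs
begin

text \<open>
  An isomorphism of Cayley graphs can be composed with a right translation so that it fixes the
  identity; it then maps the neighbourhood S of the identity onto S'. Two distinct generators
  are disjoint transpositions iff they have exactly one common neighbour besides the identity,
  and three pairwise overlapping generators form a triangle of T(S), rather than a star, iff they
  have a common neighbour besides the identity. So the isomorphism induces a bijection between
  the edge sets of T(S) and T(S') preserving adjacency and triangles. As in Whitney's theorem on
  line graphs, such an edge bijection is induced by a vertex bijection, because T(S) has no
  isolated vertices and no isolated edges (S generates S_n, n \<ge> 3); this vertex bijection is an
  isomorphism T(S) \<cong> T(S'). Conversely, conjugation by an isomorphism of transposition graphs is an
  isomorphism of the Cayley graphs. Edge-transitivity is transferred in the same way, after using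
  right translations to move edges of the Cayley graph to the identity.
\<close>

section \<open>Edge bijections of graphs induced by vertex bijections\<close>

lemma card2_Int_singleton:
  assumes "card A = 2" "card B = 2" "A \<noteq> B" "A \<inter> B \<noteq> {}"
  shows "\<exists>w. A \<inter> B = {w}"
  using assms by (auto simp: card_2_iff doubleton_eq_iff)

lemma card2_eq_if_subset: "card A = 2 \<Longrightarrow> card B = 2 \<Longrightarrow> A \<subseteq> B \<Longrightarrow> A = B"
  by (metis card_seteq card.infinite order.refl zero_neq_numeral)

lemma card2_eq_doubleton: "card A = 2 \<Longrightarrow> x \<in> A \<Longrightarrow> y \<in> A \<Longrightarrow> x \<noteq> y \<Longrightarrow> A = {x, y}"
  by (auto simp: card_2_iff)

lemma card2_obtain_other: "card A = 2 \<Longrightarrow> x \<in> A \<Longrightarrow> \<exists>y. y \<noteq> x \<and> A = {x, y}"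
  by (auto simp: card_2_iff)

locale edge_isomorphism =
  fixes V :: "'v set" and F F' :: "'v set set" and \<psi> :: "'v set \<Rightarrow> 'v set"
  assumes finite_vertices: "finite V"
    and card_edge: "e \<in> F \<Longrightarrow> card e = 2"
    and card_edge': "e \<in> F' \<Longrightarrow> card e = 2"
    and edges_cover: "\<Union>F = V"
    and edges'_subset: "\<Union>F' \<subseteq> V"
    and bij: "bij_betw \<psi> F F'"
    and disjoint_iff: "e \<in> F \<Longrightarrow> f \<in> F \<Longrightarrow> e \<inter> f = {} \<longleftrightarrow> \<psi> e \<inter> \<psi> f = {}"
    and triangle_iff: "\<lbrakk>e \<in> F; f \<in> F; g \<in> F; e \<noteq> f; e \<noteq> g; f \<noteq> g;
                         e \<inter> f \<noteq> {}; e \<inter> g \<noteq> {}; f \<inter> g \<noteq> {}\<rbrakk> \<Longrightarrow>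
                       e \<inter> f \<inter> g = {} \<longleftrightarrow> \<psi> e \<inter> \<psi> f \<inter> \<psi> g = {}"
    and no_isolated_edge: "e \<in> F \<Longrightarrow> \<exists>f\<in>F. f \<noteq> e \<and> e \<inter> f \<noteq> {}"
begin

lemma image_edge: "e \<in> F \<Longrightarrow> \<psi> e \<in> F'"
  using bij by (blast dest: bij_betwE)

lemma image_edge_eq_iff: "e \<in> F \<Longrightarrow> f \<in> F \<Longrightarrow> \<psi> e = \<psi> f \<longleftrightarrow> e = f"
  using bij by (auto simp: bij_betw_def inj_on_eq_iff)

lemma card_image_edge: "e \<in> F \<Longrightarrow> card (\<psi> e) = 2"
  by (simp add: card_edge' image_edge)

text \<open>The images of the edges through a vertex of degree at least 2 pairwise meet and contain no
  triangle, hence all pass through one vertex.\<close>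

lemma branch_vertex_image:
  assumes e1: "e1 \<in> F" and e2: "e2 \<in> F" "e1 \<noteq> e2" and v: "v \<in> e1" "v \<in> e2"
  shows "\<exists>w. \<forall>f\<in>F. w \<in> \<psi> f \<longleftrightarrow> v \<in> f"
proof -
  have "\<psi> e1 \<noteq> \<psi> e2" "\<psi> e1 \<inter> \<psi> e2 \<noteq> {}"
    using e1 e2 v image_edge_eq_iff disjoint_iff by blast+
  then obtain w where w: "\<psi> e1 \<inter> \<psi> e2 = {w}"
    using card2_Int_singleton card_image_edge e1 e2 by blast
  obtain u where "e1 \<inter> e2 = {u}"
    using card2_Int_singleton[OF card_edge[OF e1] card_edge[OF e2(1)] e2(2)] v by blast
  with v have v12: "e1 \<inter> e2 = {v}" by (metis IntI singletonD)
  have "w \<in> \<psi> f \<longleftrightarrow> v \<in> f" if f: "f \<in> F" for f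
  proof (cases "f = e1 \<or> f = e2")
    case True
    then show ?thesis using w v by auto
  next
    case False
    show ?thesis
    proof
      assume "w \<in> \<psi> f"
      then have "e1 \<inter> f \<noteq> {}" "e2 \<inter> f \<noteq> {}" "\<psi> e1 \<inter> \<psi> e2 \<inter> \<psi> f \<noteq> {}"
        using w disjoint_iff e1 e2 f by auto
      then have "e1 \<inter> e2 \<inter> f \<noteq> {}"
        using triangle_iff e1 e2 f False v by blast
      then show "v \<in> f" using v12 by auto
    next
      assume "v \<in> f"
      then have "\<psi> e1 \<inter> \<psi> e2 \<inter> \<psi> f \<noteq> {}"
        using triangle_iff[of e1 e2 f] e1 e2 f False v by blast
      then show "w \<in> \<psi> f" using w by auto
    qed
  qed
  then show ?thesis by blast
qed

text \<open>A vertex v of degree 1, on the edge {v, x}: as the edge is not isolated, x has degree at least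
  2, and v goes to the endpoint of the image edge not assigned to x.\<close>

lemma vertex_image_exists:
  assumes "v \<in> V"
  shows "\<exists>w. \<forall>f\<in>F. w \<in> \<psi> f \<longleftrightarrow> v \<in> f"
proof -
  obtain e where e: "e \<in> F" "v \<in> e" using edges_cover assms by blast
  show ?thesis
  proof (cases "\<exists>f\<in>F. f \<noteq> e \<and> v \<in> f")
    case True
    then show ?thesis using branch_vertex_image e by blast
  next
    case False
    then have only_e: "\<And>f. f \<in> F \<Longrightarrow> v \<in> f \<Longrightarrow> f = e" by blast
    obtain f x where f: "f \<in> F" "f \<noteq> e" "x \<in> e" "x \<in> f"
      using no_isolated_edge[OF e(1)] by blast
    have "x \<noteq> v" using only_e f by blast
    then have e_eq: "e = {v, x}" using card2_eq_doubleton[OF card_edge[OF e(1)] e(2) f(3)] by blast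
    obtain wx where wx: "\<forall>g\<in>F. wx \<in> \<psi> g \<longleftrightarrow> x \<in> g"
      using branch_vertex_image[OF e(1) f(1) f(2)[symmetric] f(3) f(4)] by blast
    then have "wx \<in> \<psi> e" using e(1) f(3) by blast
    then obtain w where w: "w \<noteq> wx" "\<psi> e = {wx, w}"
      using card2_obtain_other[OF card_image_edge[OF e(1)]] by blast
    have "w \<in> \<psi> g \<longleftrightarrow> v \<in> g" if g: "g \<in> F" for g
    proof (cases "g = e")
      case True
      then show ?thesis using w e by auto
    next
      case False
      have "w \<notin> \<psi> g"
      proof
        assume wg: "w \<in> \<psi> g"
        then have "\<psi> e \<inter> \<psi> g \<noteq> {}" using w by blast
        then have "e \<inter> g \<noteq> {}" using disjoint_iff[OF e(1) g] by blast
        then have "x \<in> g" using e_eq only_e g False by blast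
        then have "wx \<in> \<psi> g" using wx g by blast
        then have "\<psi> e \<subseteq> \<psi> g" using w(2) wg by simp
        then have "\<psi> e = \<psi> g" using card2_eq_if_subset card_image_edge e g by blast
        then show False using image_edge_eq_iff e g False by blast
      qed
      then show ?thesis using only_e g False by blast
    qed
    then show ?thesis by blast
  qed
qed

definition vertex_map :: "'v \<Rightarrow> 'v" where
  "vertex_map v = (SOME w. \<forall>f\<in>F. w \<in> \<psi> f \<longleftrightarrow> v \<in> f)"

lemma vertex_map_in_image_iff: "v \<in> V \<Longrightarrow> f \<in> F \<Longrightarrow> vertex_map v \<in> \<psi> f \<longleftrightarrow> v \<in> f"
  unfolding vertex_map_def using someI_ex[OF vertex_image_exists] by blast

lemma image_edge_eq_vertex_map_image:
  assumes e: "e \<in> F"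
  shows "\<psi> e = vertex_map ` e"
proof -
  obtain f x where f: "f \<in> F" "f \<noteq> e" "x \<in> e" "x \<in> f"
    using no_isolated_edge[OF e] by blast
  obtain y where y: "y \<noteq> x" "e = {x, y}"
    using card2_obtain_other[OF card_edge[OF e] f(3)] by blast
  have "y \<notin> f"
  proof
    assume "y \<in> f"
    then have "e \<subseteq> f" using y(2) f(4) by simp
    then show False using card2_eq_if_subset[OF card_edge[OF e] card_edge[OF f(1)]] f(2) by blast
  qed
  have xy: "x \<in> V" "y \<in> V" using edges_cover e y(2) by auto
  have "vertex_map x \<in> \<psi> f" "vertex_map y \<notin> \<psi> f"
    using vertex_map_in_image_iff[OF xy(1) f(1)] vertex_map_in_image_iff[OF xy(2) f(1)]
      f(4) \<open>y \<notin> f\<close> by simp_all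
  then have ne: "vertex_map x \<noteq> vertex_map y" by metis
  have "vertex_map x \<in> \<psi> e" "vertex_map y \<in> \<psi> e"
    using vertex_map_in_image_iff[OF xy(1) e] vertex_map_in_image_iff[OF xy(2) e] y(2) by simp_all
  then have "\<psi> e = {vertex_map x, vertex_map y}"
    using card2_eq_doubleton[OF card_image_edge[OF e]] ne by blast
  then show ?thesis using y(2) by simp
qed

lemma inj_on_vertex_map: "inj_on vertex_map V"
proof
  fix a b assume ab: "a \<in> V" "b \<in> V" "vertex_map a = vertex_map b"
  obtain f where f: "f \<in> F" "a \<in> f" using edges_cover ab(1) by blast
  then have "b \<in> f"
    using vertex_map_in_image_iff[OF ab(1) f(1)] vertex_map_in_image_iff[OF ab(2) f(1)] ab(3)
    by simp
  show "a = b"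
  proof (rule ccontr)
    assume "a \<noteq> b"
    then have "f = {a, b}" using card2_eq_doubleton[OF card_edge[OF f(1)] f(2) \<open>b \<in> f\<close>] by blast
    then have "card (\<psi> f) = 1" using image_edge_eq_vertex_map_image[OF f(1)] ab(3) by simp
    then show False using card_image_edge[OF f(1)] by simp
  qed
qed

lemma bij_betw_vertex_map: "bij_betw vertex_map V V"
proof -
  have "vertex_map v \<in> V" if v: "v \<in> V" for v
  proof -
    obtain f where f: "f \<in> F" "v \<in> f" using edges_cover v by blast
    then have "vertex_map v \<in> \<psi> f" using vertex_map_in_image_iff v by blast
    then show ?thesis using image_edge[OF f(1)] edges'_subset by blast
  qed
  then have "vertex_map ` V = V"
    using endo_inj_surj[OF finite_vertices _ inj_on_vertex_map] by blast
  then show ?thesis using inj_on_vertex_map by (simp add: bij_betw_def)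
qed

theorem ex_vertex_bijection: "\<exists>\<sigma>. bij_betw \<sigma> V V \<and> (\<forall>e\<in>F. \<psi> e = \<sigma> ` e)"
  using bij_betw_vertex_map image_edge_eq_vertex_map_image by blast

end

definition moved :: "('a \<Rightarrow> 'a) \<Rightarrow> 'a set" where
  "moved f = {x. f x \<noteq> x}"

lemma moved_transpose: "i \<noteq> j \<Longrightarrow> moved (transpose i j) = {i, j}"
  by (auto simp: moved_def transpose_def)

lemma transpose_eq_transpose_iff:
  assumes "i \<noteq> j" "k \<noteq> l"
  shows "transpose i j = transpose k l \<longleftrightarrow> {i, j} = {k, l}"
proof
  assume "transpose i j = transpose k l"
  then show "{i, j} = {k, l}" using moved_transpose assms by metis
next
  assume "{i, j} = {k, l}"
  then show "transpose i j = transpose k l"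
    by (metis doubleton_eq_iff transpose_commute)
qed

lemma transpose_eq_if_moved_eq:
  "i \<noteq> j \<Longrightarrow> k \<noteq> l \<Longrightarrow> moved (transpose i j) = {k, l} \<Longrightarrow> transpose i j = transpose k l"
  by (simp add: moved_transpose transpose_eq_transpose_iff)

lemma transpose_comp_disjoint_commute:
  "{i, j} \<inter> {k, l} = {} \<Longrightarrow> transpose k l \<circ> transpose i j = transpose i j \<circ> transpose k l"
  by (auto simp: fun_eq_iff transpose_def)

lemma transpose_comp_triangle:
  assumes "i \<noteq> j" "i \<noteq> k" "j \<noteq> k"
  shows "transpose i k \<circ> transpose i j = transpose i j \<circ> transpose j k"
    and "transpose j k \<circ> transpose i k = transpose i j \<circ> transpose j k"
    and "transpose j k \<circ> transpose i j = transpose i k \<circ> transpose j k"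
  using assms by (auto simp: fun_eq_iff transpose_def)

text \<open>A common neighbour \<alpha> s = \<beta> t of two generators s, t of a Cayley graph is a product of two
  transpositions in two ways; the next two lemmas list all such factorisations.\<close>

lemma transpose_comp_factor_disjoint:
  assumes "distinct [i, j, k, l]" "p \<noteq> q" "r \<noteq> w"
    and eq: "transpose p q \<circ> transpose i j = transpose r w \<circ> transpose k l"
    and ne: "transpose p q \<noteq> transpose i j"
  shows "transpose p q = transpose k l"
proof -
  have "\<And>x. transpose p q (transpose i j x) = transpose r w (transpose k l x)"
    using eq by (metis comp_apply)
  note E = this[of i] this[of j] this[of k] this[of l] this[of p] this[of q] this[of r] this[of w]
  show ?thesis using assms E unfolding transpose_def fun_eq_iff
    by (smt (verit) distinct_length_2_or_more distinct_singleton)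
qed

lemma transpose_comp_factor_adjacent:
  assumes "distinct [i, j, k]" "p \<noteq> q" "r \<noteq> w"
    and eq: "transpose p q \<circ> transpose i j = transpose r w \<circ> transpose j k"
    and ne: "transpose p q \<noteq> transpose i j"
  shows "transpose p q = transpose j k \<and> transpose r w = transpose i k \<or>
         transpose p q = transpose i k \<and> transpose r w = transpose i j"
proof -
  have "\<And>x. transpose p q (transpose i j x) = transpose r w (transpose j k x)"
    using eq by (metis comp_apply)
  note E = this[of i] this[of j] this[of k] this[of p] this[of q] this[of r] this[of w]
  show ?thesis using assms E unfolding transpose_def fun_eq_iff
    by (smt (verit) distinct_length_2_or_more distinct_singleton)
qed

lemma transpose_pair_meeting_shape:
  assumes "i \<noteq> j" "k \<noteq> l" "{i, j} \<inter> {k, l} \<noteq> {}" "{i, j} \<noteq> {k, l}"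
  obtains a b c where "distinct [a, b, c]" "transpose i j = transpose a b" "transpose k l = transpose b c"
proof -
  consider "i = k" | "i = l" | "j = k" | "j = l" using assms(3) by auto
  then show ?thesis
  proof cases
    case 1 with assms show ?thesis by (intro that[of j i l]) (auto simp: transpose_commute)
  next
    case 2 with assms show ?thesis by (intro that[of j i k]) (auto simp: transpose_commute)
  next
    case 3 with assms show ?thesis by (intro that[of i j l]) (auto simp: transpose_commute)
  next
    case 4 with assms show ?thesis by (intro that[of i j k]) (auto simp: transpose_commute)
  qed
qed

definition graph_isomorphism ::
    "'a set \<Rightarrow> ('a \<Rightarrow> 'a \<Rightarrow> bool) \<Rightarrow> 'b set \<Rightarrow> ('b \<Rightarrow> 'b \<Rightarrow> bool) \<Rightarrow> ('a \<Rightarrow> 'b) \<Rightarrow> bool" where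
  "graph_isomorphism V E V' E' f \<longleftrightarrow> bij_betw f V V' \<and> (\<forall>x\<in>V. \<forall>y\<in>V. E x y \<longleftrightarrow> E' (f x) (f y))"

lemma graph_iso_iff_ex_isomorphism: "graph_iso V E V' E' \<longleftrightarrow> (\<exists>f. graph_isomorphism V E V' E' f)"
  unfolding graph_iso_def graph_isomorphism_def by blast

lemma graph_aut_iff_isomorphism: "graph_aut V E g \<longleftrightarrow> graph_isomorphism V E V E g"
  unfolding graph_aut_def graph_isomorphism_def by blast

lemma graph_isomorphism_comp:
  assumes f: "graph_isomorphism V E V' E' f" and g: "graph_isomorphism V' E' V'' E'' g"
  shows "graph_isomorphism V E V'' E'' (g \<circ> f)"
proof -
  have "f x \<in> V'" if "x \<in> V" for x using f that unfolding graph_isomorphism_def by (blast dest: bij_betwE)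
  then show ?thesis
    using f g bij_betw_trans unfolding graph_isomorphism_def by (metis comp_apply)
qed

definition common_neighbours :: "'a set \<Rightarrow> ('a \<Rightarrow> 'a \<Rightarrow> bool) \<Rightarrow> 'a set \<Rightarrow> 'a set" where
  "common_neighbours V E X = {x \<in> V. \<forall>y\<in>X. E y x}"

lemma common_neighbours_Un:
  "common_neighbours V E (X \<union> Y) = common_neighbours V E X \<inter> common_neighbours V E Y"
  unfolding common_neighbours_def by blast

lemma graph_isomorphism_image_common_neighbours:
  assumes f: "graph_isomorphism V E V' E' f" and X: "X \<subseteq> V"
  shows "f ` common_neighbours V E X = common_neighbours V' E' (f ` X)"
proof -
  have bij: "bij_betw f V V'" and adj: "\<And>x y. x \<in> V \<Longrightarrow> y \<in> V \<Longrightarrow> E x y \<longleftrightarrow> E' (f x) (f y)"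
    using f unfolding graph_isomorphism_def by auto
  have "f x \<in> common_neighbours V' E' (f ` X) \<longleftrightarrow> x \<in> common_neighbours V E X" if "x \<in> V" for x
    using that X bij_betwE[OF bij] unfolding common_neighbours_def
    by (auto simp: adj[symmetric] subset_iff)
  moreover have "common_neighbours V' E' (f ` X) \<subseteq> f ` V"
    using bij unfolding common_neighbours_def bij_betw_def by blast
  moreover have "common_neighbours V E X \<subseteq> V" unfolding common_neighbours_def by blast
  ultimately show ?thesis by blast
qed

section \<open>Cayley graphs of the symmetric group\<close>

lemma Sym_comp: "p \<in> Sym n \<Longrightarrow> q \<in> Sym n \<Longrightarrow> p \<circ> q \<in> Sym n"
  unfolding Sym_def by (auto intro: permutes_compose)

lemma Sym_inv: "p \<in> Sym n \<Longrightarrow> inv p \<in> Sym n"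
  unfolding Sym_def by (auto intro: permutes_inv)

lemma id_in_Sym: "id \<in> Sym n"
  unfolding Sym_def by (auto intro: permutes_id)

lemma Sym_comp_inv: "p \<in> Sym n \<Longrightarrow> p \<circ> inv p = id"
  unfolding Sym_def by (auto intro: permutes_inv_o)

lemma transpose_in_Sym: "i \<in> {1..n} \<Longrightarrow> j \<in> {1..n} \<Longrightarrow> transpose i j \<in> Sym n"
  unfolding Sym_def by (simp add: permutes_swap_id)

lemma cay_adj_id_iff [simp]: "cay_adj S id x \<longleftrightarrow> x \<in> S"
  unfolding cay_adj_def by auto

lemma graph_isomorphism_cay_right_mult:
  assumes p: "p \<in> Sym n"
  shows "graph_isomorphism (Sym n) (cay_adj S) (Sym n) (cay_adj S) (\<lambda>h. h \<circ> p)"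
proof -
  have pp: "h \<circ> p \<circ> inv p = h" "h \<circ> inv p \<circ> p = h" for h
    using p unfolding Sym_def by (simp_all add: o_assoc[symmetric] permutes_inv_o)
  have "bij_betw (\<lambda>h. h \<circ> p) (Sym n) (Sym n)"
    using pp Sym_comp Sym_inv p by (intro bij_betw_byWitness[where f' = "\<lambda>h. h \<circ> inv p"]) auto
  moreover have "cay_adj S x y \<longleftrightarrow> cay_adj S (x \<circ> p) (y \<circ> p)" for x y
    unfolding cay_adj_def by (metis pp(1) o_assoc)
  ultimately show ?thesis unfolding graph_isomorphism_def by blast
qed

lemma cay_iso_ex_isomorphism_fixing_id:
  assumes "graph_iso (Sym n) (cay_adj S) (Sym n) (cay_adj S')"
  obtains \<phi> where "graph_isomorphism (Sym n) (cay_adj S) (Sym n) (cay_adj S') \<phi>" "\<phi> id = id"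
proof -
  obtain f where f: "graph_isomorphism (Sym n) (cay_adj S) (Sym n) (cay_adj S') f"
    using assms graph_iso_iff_ex_isomorphism by blast
  then have c: "f id \<in> Sym n"
    using id_in_Sym unfolding graph_isomorphism_def by (blast dest: bij_betwE)
  show ?thesis
  proof (rule that)
    show "graph_isomorphism (Sym n) (cay_adj S) (Sym n) (cay_adj S') ((\<lambda>h. h \<circ> inv (f id)) \<circ> f)"
      by (rule graph_isomorphism_comp[OF f graph_isomorphism_cay_right_mult[OF Sym_inv[OF c]]])
    show "((\<lambda>h. h \<circ> inv (f id)) \<circ> f) id = id"
      using Sym_comp_inv[OF c] by simp
  qed
qed

lemma cay_isomorphism_fixing_id_bij_betw:
  assumes \<phi>: "graph_isomorphism (Sym n) (cay_adj S) (Sym n) (cay_adj S') \<phi>" "\<phi> id = id"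
    and S: "S \<subseteq> Sym n" and S': "S' \<subseteq> Sym n"
  shows "bij_betw \<phi> S S'"
proof -
  have bij: "bij_betw \<phi> (Sym n) (Sym n)"
    and adj: "\<And>x y. x \<in> Sym n \<Longrightarrow> y \<in> Sym n \<Longrightarrow> cay_adj S x y \<longleftrightarrow> cay_adj S' (\<phi> x) (\<phi> y)"
    using \<phi>(1) unfolding graph_isomorphism_def by auto
  have mem: "x \<in> S \<longleftrightarrow> \<phi> x \<in> S'" if "x \<in> Sym n" for x
    using adj[OF id_in_Sym that] \<phi>(2) by simp
  have "S' \<subseteq> \<phi> ` S"
  proof
    fix y assume y: "y \<in> S'"
    then obtain x where "x \<in> Sym n" "y = \<phi> x"
      using S' bij unfolding bij_betw_def by blast
    then show "y \<in> \<phi> ` S" using mem y by blast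
  qed
  moreover have "\<phi> ` S \<subseteq> S'" using mem S by blast
  moreover have "inj_on \<phi> S"
    using bij S unfolding bij_betw_def by (blast intro: inj_on_subset)
  ultimately show ?thesis by (simp add: bij_betw_def subset_antisym)
qed

text \<open>The identity is a common neighbour of every set of generators; it is left out.\<close>

definition cay_common_neighbours :: "nat \<Rightarrow> (nat \<Rightarrow> nat) set \<Rightarrow> (nat \<Rightarrow> nat) set \<Rightarrow> (nat \<Rightarrow> nat) set" where
  "cay_common_neighbours n S X = common_neighbours (Sym n) (cay_adj S) X - {id}"

lemma cay_common_neighbours_Un:
  "cay_common_neighbours n S (X \<union> Y) = cay_common_neighbours n S X \<inter> cay_common_neighbours n S Y"
  by (auto simp: cay_common_neighbours_def common_neighbours_Un)

lemma cay_isomorphism_image_common_neighbours: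
  assumes \<phi>: "graph_isomorphism (Sym n) (cay_adj S) (Sym n) (cay_adj S') \<phi>" "\<phi> id = id"
    and X: "X \<subseteq> Sym n"
  shows "\<phi> ` cay_common_neighbours n S X = cay_common_neighbours n S' (\<phi> ` X)"
proof -
  have "inj_on \<phi> (Sym n)" using \<phi>(1) unfolding graph_isomorphism_def bij_betw_def by blast
  then have "\<phi> ` cay_common_neighbours n S X = \<phi> ` common_neighbours (Sym n) (cay_adj S) X - \<phi> ` {id}"
    unfolding cay_common_neighbours_def
    by (rule inj_on_image_set_diff) (auto simp: common_neighbours_def id_in_Sym)
  then show ?thesis
    using graph_isomorphism_image_common_neighbours[OF \<phi>(1) X] \<phi>(2)
    by (simp add: cay_common_neighbours_def)
qed

section \<open>Cayley graphs generated by transpositions\<close>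

lemma generated_preserves:
  assumes A: "\<And>s x. s \<in> S \<Longrightarrow> x \<in> A \<Longrightarrow> s x \<in> A \<and> inv s x \<in> A"
    and g: "g \<in> generated S" and x: "x \<in> A"
  shows "g x \<in> A"
  using g x by induction (auto dest: A)

locale transposition_set =
  fixes n :: nat and S :: "(nat \<Rightarrow> nat) set"
  assumes transposition: "s \<in> S \<Longrightarrow> is_transposition n s"
begin

lemma obtain_transpose:
  assumes "s \<in> S"
  obtains i j where "i \<in> {1..n}" "j \<in> {1..n}" "i \<noteq> j" "s = transpose i j"
  using transposition[OF assms] unfolding is_transposition_def by blast

lemma subset_Sym: "S \<subseteq> Sym n"
  using obtain_transpose transpose_in_Sym by blast

lemma comp_self: "s \<in> S \<Longrightarrow> s \<circ> s = id"
  by (metis obtain_transpose transpose_comp_involutory)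

lemma comp_right_cancel: "s \<in> S \<Longrightarrow> a \<circ> s = b \<circ> s \<longleftrightarrow> a = b"
  by (metis comp_id comp_self o_assoc)

lemma comp_eq_id_iff: "s \<in> S \<Longrightarrow> t \<circ> s = id \<longleftrightarrow> t = s"
  by (metis comp_right_cancel comp_self)

lemma moved_subset: "s \<in> S \<Longrightarrow> moved s \<subseteq> {1..n}"
  by (metis obtain_transpose moved_transpose empty_subsetI insert_subset)

lemma card_moved: "s \<in> S \<Longrightarrow> card (moved s) = 2"
  by (metis obtain_transpose moved_transpose card_2_iff)

lemma inj_on_moved: "inj_on moved S"
proof
  fix s t assume "s \<in> S" "t \<in> S" "moved s = moved t"
  then show "s = t"
    by (metis obtain_transpose moved_transpose transpose_eq_if_moved_eq)
qed

lemma mem_cay_common_neighbours_iff: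
  "x \<in> cay_common_neighbours n S X \<longleftrightarrow> x \<in> Sym n \<and> x \<noteq> id \<and> (\<forall>y\<in>X. \<exists>s\<in>S. x = s \<circ> y)"
  unfolding cay_common_neighbours_def common_neighbours_def cay_adj_def by blast

lemma comp_mem_cay_common_neighbours:
  assumes "\<alpha> \<in> S" "s \<in> S" "\<beta> \<in> S" "t \<in> S" "\<alpha> \<noteq> s" "\<alpha> \<circ> s = \<beta> \<circ> t"
  shows "\<alpha> \<circ> s \<in> cay_common_neighbours n S {s, t}"
  using assms subset_Sym Sym_comp comp_eq_id_iff unfolding mem_cay_common_neighbours_iff by blast

lemma cay_common_neighbours_disjoint:
  assumes s: "s \<in> S" and t: "t \<in> S" "t \<noteq> s" and disj: "moved s \<inter> moved t = {}"
  shows "cay_common_neighbours n S {s, t} = {t \<circ> s}"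
proof -
  obtain i j where ij: "i \<noteq> j" "s = transpose i j" using obtain_transpose s by metis
  obtain k l where kl: "k \<noteq> l" "t = transpose k l" using obtain_transpose t(1) by metis
  have ijkl: "distinct [i, j, k, l]" using disj ij kl by (auto simp: moved_transpose)
  have "x = t \<circ> s" if x: "x \<in> cay_common_neighbours n S {s, t}" for x
  proof -
    obtain \<alpha> \<beta> where \<alpha>: "\<alpha> \<in> S" "x = \<alpha> \<circ> s" and \<beta>: "\<beta> \<in> S" "x = \<beta> \<circ> t"
      using x unfolding mem_cay_common_neighbours_iff by blast
    obtain p q where pq: "p \<noteq> q" "\<alpha> = transpose p q" using obtain_transpose \<alpha>(1) by metis
    obtain r w where rw: "r \<noteq> w" "\<beta> = transpose r w" using obtain_transpose \<beta>(1) by metis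
    have "\<alpha> \<noteq> s" using x \<alpha> comp_self s unfolding mem_cay_common_neighbours_iff by blast
    then have "\<alpha> = t"
      using transpose_comp_factor_disjoint[OF ijkl pq(1) rw(1)] \<alpha> \<beta> pq rw ij kl by metis
    then show ?thesis using \<alpha> by simp
  qed
  moreover have "t \<circ> s \<in> cay_common_neighbours n S {s, t}"
  proof -
    have "t \<circ> s = s \<circ> t"
      using transpose_comp_disjoint_commute disj ij kl by (simp add: moved_transpose)
    then show ?thesis using comp_mem_cay_common_neighbours s t by blast
  qed
  ultimately show ?thesis by blast
qed

lemma cay_common_neighbours_adjacent:
  assumes abc: "distinct [a, b, c]" and s: "transpose a b \<in> S" and t: "transpose b c \<in> S"
  shows "cay_common_neighbours n S {transpose a b, transpose b c} =
    (if transpose a c \<in> S then {transpose b c \<circ> transpose a b, transpose a c \<circ> transpose a b} else {})"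
proof -
  let ?s = "transpose a b" and ?t = "transpose b c" and ?u = "transpose a c"
  have sub: "x \<in> {?t \<circ> ?s, ?u \<circ> ?s} \<and> ?u \<in> S"
    if x: "x \<in> cay_common_neighbours n S {?s, ?t}" for x
  proof -
    obtain \<alpha> \<beta> where \<alpha>: "\<alpha> \<in> S" "x = \<alpha> \<circ> ?s" and \<beta>: "\<beta> \<in> S" "x = \<beta> \<circ> ?t"
      using x unfolding mem_cay_common_neighbours_iff by blast
    obtain p q where pq: "p \<noteq> q" "\<alpha> = transpose p q" using obtain_transpose \<alpha>(1) by metis
    obtain r w where rw: "r \<noteq> w" "\<beta> = transpose r w" using obtain_transpose \<beta>(1) by metis
    have "\<alpha> \<noteq> ?s" using x \<alpha> comp_self s unfolding mem_cay_common_neighbours_iff by blast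
    then have "\<alpha> = ?t \<and> \<beta> = ?u \<or> \<alpha> = ?u \<and> \<beta> = ?s"
      using transpose_comp_factor_adjacent[OF abc pq(1) rw(1)] \<alpha> \<beta> pq rw by metis
    then show ?thesis using \<alpha> \<beta> by auto
  qed
  moreover have "{?t \<circ> ?s, ?u \<circ> ?s} \<subseteq> cay_common_neighbours n S {?s, ?t}" if u: "?u \<in> S"
  proof -
    have abc': "a \<noteq> b" "a \<noteq> c" "b \<noteq> c" using abc by auto
    have "?t \<noteq> ?s" "?u \<noteq> ?s" using abc' by (simp_all add: transpose_eq_transpose_iff doubleton_eq_iff)
    moreover have "?t \<circ> ?s = ?u \<circ> ?t" "?u \<circ> ?s = ?s \<circ> ?t"
      using transpose_comp_triangle[OF abc'] by simp_all
    ultimately show ?thesis using comp_mem_cay_common_neighbours s t u by blast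
  qed
  ultimately show ?thesis by auto
qed

lemma cay_common_neighbours_adjacent_subset:
  assumes "distinct [a, b, c]" "transpose a b \<in> S" "transpose b c \<in> S"
  shows "cay_common_neighbours n S {transpose a b, transpose b c} \<subseteq>
    {transpose b c \<circ> transpose a b, transpose a c \<circ> transpose a b}"
  using cay_common_neighbours_adjacent[OF assms] by (cases "transpose a c \<in> S") simp_all

lemma is_singleton_cay_common_neighbours_iff:
  assumes s: "s \<in> S" and t: "t \<in> S" "t \<noteq> s"
  shows "is_singleton (cay_common_neighbours n S {s, t}) \<longleftrightarrow> moved s \<inter> moved t = {}"
proof (cases "moved s \<inter> moved t = {}")
  case True
  then show ?thesis using cay_common_neighbours_disjoint s t by simp
next
  case False
  obtain i j where ij: "i \<noteq> j" "s = transpose i j" using obtain_transpose s by metis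
  obtain k l where kl: "k \<noteq> l" "t = transpose k l" using obtain_transpose t(1) by metis
  have "{i, j} \<noteq> {k, l}" using t(2) ij kl transpose_eq_transpose_iff by metis
  then obtain a b c where abc: "distinct [a, b, c]" "s = transpose a b" "t = transpose b c"
    using transpose_pair_meeting_shape[OF ij(1) kl(1)] False ij kl by (metis moved_transpose)
  have "transpose b c \<noteq> transpose a c"
    using abc by (auto simp: transpose_eq_transpose_iff doubleton_eq_iff)
  then have "transpose b c \<circ> transpose a b \<noteq> transpose a c \<circ> transpose a b"
    using comp_right_cancel s abc(2) by metis
  then have "\<not> is_singleton (cay_common_neighbours n S {s, t})"
    using cay_common_neighbours_adjacent[OF abc(1)] s t abc
    by (auto simp: is_singleton_def doubleton_eq_iff)
  then show ?thesis using False by simp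
qed

lemma cay_common_neighbours_triangle:
  assumes abc: "distinct [a, b, c]"
    and S: "transpose a b \<in> S" "transpose b c \<in> S" "transpose a c \<in> S"
  shows "transpose a c \<circ> transpose a b \<in>
    cay_common_neighbours n S {transpose a b, transpose b c, transpose a c}"
proof -
  have abc': "a \<noteq> b" "a \<noteq> c" "b \<noteq> c" using abc by auto
  have "transpose a c \<noteq> transpose a b"
    using abc' by (simp add: transpose_eq_transpose_iff doubleton_eq_iff)
  moreover have "transpose a c \<circ> transpose a b = transpose a b \<circ> transpose b c"
    "transpose a c \<circ> transpose a b = transpose b c \<circ> transpose a c"
    using transpose_comp_triangle[OF abc'] by simp_all
  ultimately have "transpose a c \<circ> transpose a b \<in> cay_common_neighbours n S {transpose a b, transpose b c}"
    "transpose a c \<circ> transpose a b \<in> cay_common_neighbours n S {transpose a b, transpose a c}"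
    using comp_mem_cay_common_neighbours S by blast+
  moreover have "{transpose a b, transpose b c, transpose a c} =
      {transpose a b, transpose b c} \<union> {transpose a b, transpose a c}" by blast
  then have "cay_common_neighbours n S {transpose a b, transpose b c, transpose a c} =
      cay_common_neighbours n S {transpose a b, transpose b c} \<inter>
      cay_common_neighbours n S {transpose a b, transpose a c}"
    by (simp only: cay_common_neighbours_Un)
  ultimately show ?thesis by blast
qed

lemma cay_common_neighbours_star:
  assumes abc: "distinct [a, b, c]" and abe: "distinct [a, b, e]" and "c \<noteq> e"
    and S: "transpose a b \<in> S" "transpose b c \<in> S" "transpose b e \<in> S"
  shows "cay_common_neighbours n S {transpose a b, transpose b c, transpose b e} = {}"
proof -
  have "{transpose b c, transpose a c} \<inter> {transpose b e, transpose a e} = {}"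
    using assms by (auto simp: transpose_eq_transpose_iff doubleton_eq_iff)
  then have "{transpose b c \<circ> transpose a b, transpose a c \<circ> transpose a b} \<inter>
      {transpose b e \<circ> transpose a b, transpose a e \<circ> transpose a b} = {}"
    using comp_right_cancel[OF S(1)] by auto
  moreover have "{transpose a b, transpose b c, transpose b e} =
      {transpose a b, transpose b c} \<union> {transpose a b, transpose b e}" by blast
  then have "cay_common_neighbours n S {transpose a b, transpose b c, transpose b e} =
      cay_common_neighbours n S {transpose a b, transpose b c} \<inter>
      cay_common_neighbours n S {transpose a b, transpose b e}"
    by (simp only: cay_common_neighbours_Un)
  ultimately show ?thesis
    using cay_common_neighbours_adjacent_subset[OF abc S(1,2)]
      cay_common_neighbours_adjacent_subset[OF abe S(1,3)] by blast
qed

text \<open>Three pairwise overlapping transpositions either form a triangle on three points or a star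
  at a common point; only a triangle has a common neighbour besides the identity.\<close>

lemma cay_common_neighbours_triple_empty_iff:
  assumes s: "s \<in> S" and t: "t \<in> S" and u: "u \<in> S" and ne: "s \<noteq> t" "s \<noteq> u" "t \<noteq> u"
    and meet: "moved s \<inter> moved t \<noteq> {}" "moved s \<inter> moved u \<noteq> {}" "moved t \<inter> moved u \<noteq> {}"
  shows "cay_common_neighbours n S {s, t, u} = {} \<longleftrightarrow> moved s \<inter> moved t \<inter> moved u \<noteq> {}"
proof -
  obtain i j where ij: "i \<noteq> j" "s = transpose i j" using obtain_transpose s by metis
  obtain k l where kl: "k \<noteq> l" "t = transpose k l" using obtain_transpose t by metis
  have "{i, j} \<noteq> {k, l}" using ne ij kl transpose_eq_transpose_iff by metis
  then obtain a b c where abc: "distinct [a, b, c]" "s = transpose a b" "t = transpose b c"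
    using transpose_pair_meeting_shape[OF ij(1) kl(1)] meet(1) ij kl by (metis moved_transpose)
  have mst: "moved s = {a, b}" "moved t = {b, c}" using abc by (simp_all add: moved_transpose)
  obtain p q where pq: "p \<noteq> q" "u = transpose p q" using obtain_transpose u by metis
  show ?thesis
  proof (cases "b \<in> moved u")
    case False
    then have "a \<in> moved u" "c \<in> moved u" using meet(2,3) mst by auto
    then have "moved u = {a, c}" using card2_eq_doubleton[OF card_moved[OF u]] abc by simp
    then have "u = transpose a c" using pq abc by (simp add: transpose_eq_if_moved_eq)
    then have "cay_common_neighbours n S {s, t, u} \<noteq> {}"
      using cay_common_neighbours_triangle[OF abc(1)] s t u abc by blast
    moreover have "moved s \<inter> moved t \<inter> moved u = {}" using mst False abc by auto
    ultimately show ?thesis by blast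
  next
    case True
    then have "b = p \<or> b = q" using pq by (simp add: moved_transpose)
    then obtain e where e: "e \<noteq> b" "u = transpose b e"
      using pq by (metis transpose_commute)
    have "e \<noteq> a" "e \<noteq> c" using ne abc e by (auto simp: transpose_commute)
    then have "distinct [a, b, e]" "c \<noteq> e" using abc e by auto
    then have "cay_common_neighbours n S {s, t, u} = {}"
      using cay_common_neighbours_star[OF abc(1)] s t u abc e by simp
    then show ?thesis using mst e True by auto
  qed
qed

lemma inv_eq_self: "s \<in> S \<Longrightarrow> inv s = s"
  by (metis obtain_transpose inv_transpose_eq)

lemma generates_Sym_not_invariant:
  assumes gen: "generates_Sym n S" and A: "A \<subseteq> {1..n}" "x \<in> A" "y \<in> {1..n}" "y \<notin> A"
  shows "\<exists>s\<in>S. \<exists>a\<in>A. s a \<notin> A"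
proof (rule ccontr)
  assume "\<not> ?thesis"
  then have "g x \<in> A" if "g \<in> generated S" for g
    using generated_preserves[OF _ that A(2)] inv_eq_self by metis
  moreover have "transpose x y \<in> generated S"
    using gen transpose_in_Sym A unfolding generates_Sym_def by blast
  ultimately show False using A by fastforce
qed

lemma moved_cover:
  assumes "n \<ge> 2" "generates_Sym n S"
  shows "\<Union>(moved ` S) = {1..n}"
proof
  show "\<Union>(moved ` S) \<subseteq> {1..n}" using moved_subset by blast
  show "{1..n} \<subseteq> \<Union>(moved ` S)"
  proof
    fix v assume v: "v \<in> {1..n}"
    have "(if v = 1 then 2 else 1) \<in> {1..n} - {v}" using assms(1) by auto
    then obtain s a where "s \<in> S" "a \<in> {v}" "s a \<notin> {v}"
      using generates_Sym_not_invariant[OF assms(2), of "{v}" v] v by blast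
    then show "v \<in> \<Union>(moved ` S)" unfolding moved_def by blast
  qed
qed

lemma exists_meeting_generator:
  assumes "n \<ge> 3" "generates_Sym n S" and s: "s \<in> S"
  shows "\<exists>t\<in>S. t \<noteq> s \<and> moved s \<inter> moved t \<noteq> {}"
proof -
  have "\<not> {1..n} \<subseteq> moved s"
  proof
    assume "{1..n} \<subseteq> moved s"
    moreover have "finite (moved s)" using finite_subset[OF moved_subset[OF s]] by simp
    ultimately have "card {1..n} \<le> card (moved s)" by (rule card_mono[rotated])
    then show False using card_moved[OF s] assms(1) by simp
  qed
  then obtain y where y: "y \<in> {1..n}" "y \<notin> moved s" by blast
  obtain x where x: "x \<in> moved s" using card_moved[OF s] by fastforce
  obtain t a where t: "t \<in> S" "a \<in> moved s" "t a \<notin> moved s"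
    using generates_Sym_not_invariant[OF assms(2) moved_subset[OF s] x y] by blast
  have "t \<noteq> s"
  proof
    assume "t = s"
    obtain i j where "i \<noteq> j" "s = transpose i j" using obtain_transpose[OF s] by metis
    then show False using t \<open>t = s\<close> by (auto simp: moved_transpose)
  qed
  moreover have "a \<in> moved t" using t unfolding moved_def by auto
  ultimately show ?thesis using t by blast
qed

end

section \<open>Isomorphisms of Cayley graphs fixing the identity\<close>

locale cay_isomorphism_fixing_id =
  A: transposition_set n S + B: transposition_set n S' for n S S' +
  fixes \<phi> :: "(nat \<Rightarrow> nat) \<Rightarrow> (nat \<Rightarrow> nat)"
  assumes iso: "graph_isomorphism (Sym n) (cay_adj S) (Sym n) (cay_adj S') \<phi>"
    and fixes_id: "\<phi> id = id"
begin

lemma bij_betw_generators: "bij_betw \<phi> S S'"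
  using cay_isomorphism_fixing_id_bij_betw[OF iso fixes_id A.subset_Sym B.subset_Sym] .

lemma image_common_neighbours:
  "X \<subseteq> S \<Longrightarrow> \<phi> ` cay_common_neighbours n S X = cay_common_neighbours n S' (\<phi> ` X)"
  using cay_isomorphism_image_common_neighbours[OF iso fixes_id] A.subset_Sym by (meson subset_trans)

lemma inj_on_common_neighbours: "inj_on \<phi> (cay_common_neighbours n S X)"
proof (rule inj_on_subset)
  show "inj_on \<phi> (Sym n)" using iso unfolding graph_isomorphism_def bij_betw_def by simp
  show "cay_common_neighbours n S X \<subseteq> Sym n"
    unfolding cay_common_neighbours_def common_neighbours_def by blast
qed

lemma disjoint_iff:
  assumes s: "s \<in> S" and t: "t \<in> S"
  shows "moved s \<inter> moved t = {} \<longleftrightarrow> moved (\<phi> s) \<inter> moved (\<phi> t) = {}"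
proof (cases "s = t")
  case True
  have "\<phi> s \<in> S'" using bij_betwE[OF bij_betw_generators] s by blast
  then have "moved (\<phi> s) \<noteq> {}" "moved s \<noteq> {}"
    using A.card_moved[OF s] B.card_moved[OF \<open>\<phi> s \<in> S'\<close>] by auto
  then show ?thesis using True by simp
next
  case False
  then have ne: "\<phi> t \<noteq> \<phi> s"
    using bij_betw_generators s t unfolding bij_betw_def inj_on_def by blast
  have eq: "\<phi> ` cay_common_neighbours n S {s, t} = cay_common_neighbours n S' {\<phi> s, \<phi> t}"
    using image_common_neighbours[of "{s, t}"] s t by simp
  have "card (cay_common_neighbours n S' {\<phi> s, \<phi> t}) = card (cay_common_neighbours n S {s, t})"
    unfolding eq[symmetric] by (rule card_image[OF inj_on_common_neighbours])
  then have "is_singleton (cay_common_neighbours n S' {\<phi> s, \<phi> t}) \<longleftrightarrow>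
      is_singleton (cay_common_neighbours n S {s, t})"
    unfolding is_singleton_altdef by (rule arg_cong)
  moreover have "\<phi> s \<in> S'" "\<phi> t \<in> S'" using bij_betwE[OF bij_betw_generators] s t by blast+
  ultimately show ?thesis
    using A.is_singleton_cay_common_neighbours_iff[OF s t False[symmetric]]
      B.is_singleton_cay_common_neighbours_iff[OF _ _ ne] by simp
qed

lemma triangle_iff:
  assumes s: "s \<in> S" and t: "t \<in> S" and u: "u \<in> S" and ne: "s \<noteq> t" "s \<noteq> u" "t \<noteq> u"
    and meet: "moved s \<inter> moved t \<noteq> {}" "moved s \<inter> moved u \<noteq> {}" "moved t \<inter> moved u \<noteq> {}"
  shows "moved s \<inter> moved t \<inter> moved u = {} \<longleftrightarrow> moved (\<phi> s) \<inter> moved (\<phi> t) \<inter> moved (\<phi> u) = {}"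
proof -
  have \<phi>S: "\<phi> s \<in> S'" "\<phi> t \<in> S'" "\<phi> u \<in> S'" using bij_betwE[OF bij_betw_generators] s t u by blast+
  have ne': "\<phi> s \<noteq> \<phi> t" "\<phi> s \<noteq> \<phi> u" "\<phi> t \<noteq> \<phi> u"
    using bij_betw_generators s t u ne unfolding bij_betw_def inj_on_def by blast+
  have meet': "moved (\<phi> s) \<inter> moved (\<phi> t) \<noteq> {}" "moved (\<phi> s) \<inter> moved (\<phi> u) \<noteq> {}"
      "moved (\<phi> t) \<inter> moved (\<phi> u) \<noteq> {}"
    using disjoint_iff s t u meet by blast+
  have "\<phi> ` cay_common_neighbours n S {s, t, u} = cay_common_neighbours n S' {\<phi> s, \<phi> t, \<phi> u}"
    using image_common_neighbours[of "{s, t, u}"] s t u by simp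
  then have "cay_common_neighbours n S' {\<phi> s, \<phi> t, \<phi> u} = {} \<longleftrightarrow>
      cay_common_neighbours n S {s, t, u} = {}"
    by auto
  then show ?thesis
    using A.cay_common_neighbours_triple_empty_iff[OF s t u ne meet]
      B.cay_common_neighbours_triple_empty_iff[OF \<phi>S ne' meet'] by simp
qed

text \<open>The supports of the generators are the edges of T(S), and \<phi> acts on them.\<close>

lemma edge_isomorphism_supports:
  assumes n: "n \<ge> 3" and gen: "generates_Sym n S"
  shows "edge_isomorphism {1..n} (moved ` S) (moved ` S') (moved \<circ> \<phi> \<circ> inv_into S moved)"
    (is "edge_isomorphism _ _ _ ?\<psi>")
proof -
  have \<psi>: "?\<psi> (moved s) = moved (\<phi> s)" if "s \<in> S" for s
    using A.inj_on_moved that by simp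
  have "bij_betw (\<phi> \<circ> inv_into S moved) (moved ` S) S'"
    using bij_betw_inv_into[OF inj_on_imp_bij_betw[OF A.inj_on_moved]] bij_betw_generators
    by (rule bij_betw_trans)
  then have bij: "bij_betw ?\<psi> (moved ` S) (moved ` S')"
    unfolding comp_assoc using inj_on_imp_bij_betw[OF B.inj_on_moved] by (rule bij_betw_trans)
  show ?thesis
  proof
    fix e f assume "e \<in> moved ` S" "f \<in> moved ` S"
    then obtain s t where "s \<in> S" "t \<in> S" "e = moved s" "f = moved t" by blast
    then show "e \<inter> f = {} \<longleftrightarrow> ?\<psi> e \<inter> ?\<psi> f = {}" using disjoint_iff \<psi> by simp
  next
    fix e f g assume efg: "e \<in> moved ` S" "f \<in> moved ` S" "g \<in> moved ` S"
      and ne: "e \<noteq> f" "e \<noteq> g" "f \<noteq> g" and "e \<inter> f \<noteq> {}" "e \<inter> g \<noteq> {}" "f \<inter> g \<noteq> {}"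
    moreover obtain s t u where stu: "s \<in> S" "t \<in> S" "u \<in> S" "e = moved s" "f = moved t" "g = moved u"
      using efg by blast
    moreover have "s \<noteq> t" "s \<noteq> u" "t \<noteq> u" using ne stu by auto
    ultimately show "e \<inter> f \<inter> g = {} \<longleftrightarrow> ?\<psi> e \<inter> ?\<psi> f \<inter> ?\<psi> g = {}"
      using triangle_iff \<psi> by simp
  next
    fix e assume "e \<in> moved ` S"
    then obtain s where s: "s \<in> S" "e = moved s" by blast
    then obtain t where "t \<in> S" "t \<noteq> s" "moved s \<inter> moved t \<noteq> {}"
      using A.exists_meeting_generator[OF n gen] by blast
    moreover have "moved t \<noteq> moved s" using A.inj_on_moved s(1) calculation(1,2) by (metis inj_onD)
    ultimately show "\<exists>f\<in>moved ` S. f \<noteq> e \<and> e \<inter> f \<noteq> {}" using s(2) by blast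
  qed (use bij A.moved_cover[OF _ gen] n B.moved_subset A.card_moved B.card_moved in auto)
qed

lemma ex_relabelling:
  assumes "n \<ge> 3" "generates_Sym n S"
  obtains \<sigma> where "bij_betw \<sigma> {1..n} {1..n}" "\<forall>s\<in>S. moved (\<phi> s) = \<sigma> ` moved s"
proof -
  interpret edge_isomorphism "{1..n}" "moved ` S" "moved ` S'" "moved \<circ> \<phi> \<circ> inv_into S moved"
    using edge_isomorphism_supports[OF assms] .
  obtain \<sigma> where "bij_betw \<sigma> {1..n} {1..n}"
      "\<forall>e\<in>moved ` S. (moved \<circ> \<phi> \<circ> inv_into S moved) e = \<sigma> ` e"
    using ex_vertex_bijection by blast
  then show ?thesis using that A.inj_on_moved by simp
qed

end

section \<open>Isomorphisms of transposition graphs\<close>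

lemma trans_graph_isomorphism_if_relabelling:
  assumes S: "transposition_set n S" and S': "transposition_set n S'"
    and \<phi>: "bij_betw \<phi> S S'" and \<sigma>: "bij_betw \<sigma> {1..n} {1..n}"
    and relabel: "\<forall>s\<in>S. moved (\<phi> s) = \<sigma> ` moved s"
  shows "graph_isomorphism {1..n} (trans_adj S) {1..n} (trans_adj S') \<sigma>"
proof -
  interpret A: transposition_set n S by fact
  interpret B: transposition_set n S' by fact
  have \<sigma>_eq_iff: "\<sigma> i = \<sigma> j \<longleftrightarrow> i = j" if "i \<in> {1..n}" "j \<in> {1..n}" for i j
    by (rule inj_on_eq_iff[OF bij_betw_imp_inj_on[OF \<sigma>] that])
  have \<phi>_transpose: "\<phi> (transpose a b) = transpose (\<sigma> a) (\<sigma> b)"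
    if ab: "a \<in> {1..n}" "b \<in> {1..n}" "a \<noteq> b" "transpose a b \<in> S" for a b
  proof -
    have "\<phi> (transpose a b) \<in> S'" using bij_betwE[OF \<phi>] ab(4) by blast
    then obtain k l where kl: "k \<noteq> l" "\<phi> (transpose a b) = transpose k l"
      using B.obtain_transpose by metis
    have "moved (\<phi> (transpose a b)) = {\<sigma> a, \<sigma> b}"
      using relabel ab(4) moved_transpose[OF ab(3)] by simp
    then have "moved (transpose k l) = {\<sigma> a, \<sigma> b}" using kl(2) by simp
    moreover have "\<sigma> a \<noteq> \<sigma> b" using \<sigma>_eq_iff[OF ab(1,2)] ab(3) by simp
    ultimately show ?thesis using transpose_eq_if_moved_eq[OF kl(1)] kl(2) by simp
  qed
  have "trans_adj S i j \<longleftrightarrow> trans_adj S' (\<sigma> i) (\<sigma> j)" if ij: "i \<in> {1..n}" "j \<in> {1..n}" for i j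
  proof
    assume "trans_adj S i j"
    then have ne: "i \<noteq> j" and "transpose i j \<in> S" unfolding trans_adj_def by auto
    then have "transpose (\<sigma> i) (\<sigma> j) \<in> S'"
      using \<phi>_transpose[OF ij] bij_betwE[OF \<phi>] by metis
    moreover have "\<sigma> i \<noteq> \<sigma> j" using ne ij \<sigma>_eq_iff by simp
    ultimately show "trans_adj S' (\<sigma> i) (\<sigma> j)" unfolding trans_adj_def by simp
  next
    assume "trans_adj S' (\<sigma> i) (\<sigma> j)"
    then have ne: "i \<noteq> j" and "transpose (\<sigma> i) (\<sigma> j) \<in> \<phi> ` S"
      using \<phi> unfolding trans_adj_def bij_betw_def by auto
    then obtain s where s: "s \<in> S" "\<phi> s = transpose (\<sigma> i) (\<sigma> j)" by (metis imageE)
    obtain a b where ab: "a \<in> {1..n}" "b \<in> {1..n}" "a \<noteq> b" "s = transpose a b"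
      using A.obtain_transpose[OF s(1)] by metis
    have "transpose a b \<in> S" using s(1) ab(4) by simp
    then have "\<phi> s = transpose (\<sigma> a) (\<sigma> b)" using \<phi>_transpose[OF ab(1-3)] ab(4) by simp
    then have "transpose (\<sigma> i) (\<sigma> j) = transpose (\<sigma> a) (\<sigma> b)" using s(2) by simp
    moreover have "\<sigma> i \<noteq> \<sigma> j" "\<sigma> a \<noteq> \<sigma> b"
      using \<sigma>_eq_iff[OF ij] \<sigma>_eq_iff[OF ab(1,2)] ne ab(3) by simp_all
    ultimately have "{\<sigma> i, \<sigma> j} = {\<sigma> a, \<sigma> b}" by (simp add: transpose_eq_transpose_iff)
    then have "{i, j} = {a, b}"
      using \<sigma>_eq_iff[OF ij(1) ab(1)] \<sigma>_eq_iff[OF ij(2) ab(2)]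
        \<sigma>_eq_iff[OF ij(1) ab(2)] \<sigma>_eq_iff[OF ij(2) ab(1)]
      by (auto simp: doubleton_eq_iff)
    then have "transpose i j = s" using transpose_eq_transpose_iff[OF ne ab(3)] ab(4) by simp
    then show "trans_adj S i j" using s ne unfolding trans_adj_def by simp
  qed
  then show ?thesis using \<sigma> unfolding graph_isomorphism_def by blast
qed

lemma bij_betw_map_permutation_Sym:
  assumes bij: "bij_betw \<sigma> {1..n} {1..n}"
  shows "bij_betw (map_permutation {1..n} \<sigma>) (Sym n) (Sym n)"
proof -
  let ?V = "{1..n}"
  let ?C = "map_permutation ?V \<sigma>" and ?C' = "map_permutation ?V (inv_into ?V \<sigma>)"
  have bij': "bij_betw (inv_into ?V \<sigma>) ?V ?V" using bij by (rule bij_betw_inv_into)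
  have "?C h \<in> Sym n" "?C' h \<in> Sym n" if "h \<in> Sym n" for h
    using map_permutation_permutes[OF bij] map_permutation_permutes[OF bij'] that
    unfolding Sym_def by auto
  moreover have "?C' (?C h) = h" if "h \<in> Sym n" for h
    using map_permutation_compose_inv[OF bij _ inv_into_f_f[OF bij_betw_imp_inj_on[OF bij]]] that
    unfolding Sym_def by auto
  moreover have "\<sigma> (inv_into ?V \<sigma> i) = i" if "i \<in> ?V" for i
    using bij that unfolding bij_betw_def by (metis f_inv_into_f)
  then have "?C (?C' h) = h" if "h \<in> Sym n" for h
    using map_permutation_compose_inv[OF bij'] that unfolding Sym_def by blast
  ultimately show ?thesis by (intro bij_betw_byWitness[where f' = ?C']) auto
qed

lemma cay_isomorphism_map_permutation:
  assumes S: "transposition_set n S" and S': "transposition_set n S'"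
    and \<sigma>: "graph_isomorphism {1..n} (trans_adj S) {1..n} (trans_adj S') \<sigma>"
  shows "graph_isomorphism (Sym n) (cay_adj S) (Sym n) (cay_adj S') (map_permutation {1..n} \<sigma>)"
proof -
  interpret A: transposition_set n S by fact
  interpret B: transposition_set n S' by fact
  let ?V = "{1..n}" and ?C = "map_permutation {1..n} \<sigma>"
  have bij: "bij_betw \<sigma> ?V ?V"
    and trans_adj: "\<And>i j. i \<in> ?V \<Longrightarrow> j \<in> ?V \<Longrightarrow> trans_adj S i j \<longleftrightarrow> trans_adj S' (\<sigma> i) (\<sigma> j)"
    using \<sigma> unfolding graph_isomorphism_def by auto
  have inj: "inj_on \<sigma> ?V" using bij by (rule bij_betw_imp_inj_on)
  have bij_C: "bij_betw ?C (Sym n) (Sym n)" using bij by (rule bij_betw_map_permutation_Sym)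
  have C_comp: "?C (s \<circ> x) = ?C s \<circ> ?C x" if "x \<in> Sym n" for s x
    using map_permutation_compose'[OF inj] that unfolding Sym_def by blast
  have C_transpose: "?C (transpose i j) = transpose (\<sigma> i) (\<sigma> j)" if "i \<in> ?V" "j \<in> ?V" for i j
    using map_permutation_transpose[OF inj that] .
  have "cay_adj S x y \<longleftrightarrow> cay_adj S' (?C x) (?C y)" if xy: "x \<in> Sym n" "y \<in> Sym n" for x y
  proof
    assume "cay_adj S x y"
    then obtain i j where ij: "i \<in> ?V" "j \<in> ?V" "i \<noteq> j" "transpose i j \<in> S" "y = transpose i j \<circ> x"
      unfolding cay_adj_def using A.obtain_transpose by metis
    then have "transpose (\<sigma> i) (\<sigma> j) \<in> S'" using trans_adj unfolding trans_adj_def by blast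
    moreover have "?C y = transpose (\<sigma> i) (\<sigma> j) \<circ> ?C x" using ij C_comp C_transpose xy by simp
    ultimately show "cay_adj S' (?C x) (?C y)" unfolding cay_adj_def by blast
  next
    assume "cay_adj S' (?C x) (?C y)"
    then obtain k l where kl: "k \<in> ?V" "l \<in> ?V" "k \<noteq> l" "transpose k l \<in> S'"
        "?C y = transpose k l \<circ> ?C x"
      unfolding cay_adj_def using B.obtain_transpose by metis
    obtain i j where ij: "i \<in> ?V" "j \<in> ?V" "k = \<sigma> i" "l = \<sigma> j"
      using kl bij unfolding bij_betw_def by blast
    then have ts: "transpose i j \<in> S" using trans_adj kl unfolding trans_adj_def by auto
    have "?C y = ?C (transpose i j \<circ> x)" using kl ij C_comp C_transpose xy by simp
    then have "y = transpose i j \<circ> x"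
      using inj_onD[OF bij_betw_imp_inj_on[OF bij_C]] xy Sym_comp transpose_in_Sym ij by metis
    then show "cay_adj S x y" using ts unfolding cay_adj_def by blast
  qed
  then show ?thesis using bij_C unfolding graph_isomorphism_def by blast
qed

lemma cay_automorphism_translate:
  assumes C: "graph_isomorphism (Sym n) (cay_adj S) (Sym n) (cay_adj S) C" "C id = id"
    and ux: "u \<in> Sym n" "x \<in> Sym n"
  obtains g where "graph_isomorphism (Sym n) (cay_adj S) (Sym n) (cay_adj S) g"
    "g u = x" "g (s \<circ> u) = C s \<circ> x"
proof
  let ?g = "(\<lambda>h. h \<circ> x) \<circ> C \<circ> (\<lambda>h. h \<circ> inv u)"
  show "graph_isomorphism (Sym n) (cay_adj S) (Sym n) (cay_adj S) ?g"
    by (rule graph_isomorphism_comp[OF graph_isomorphism_cay_right_mult[OF Sym_inv[OF ux(1)]]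
          graph_isomorphism_comp[OF C(1) graph_isomorphism_cay_right_mult[OF ux(2)]]])
  show "?g u = x" using Sym_comp_inv[OF ux(1)] C(2) by simp
  have "s \<circ> u \<circ> inv u = s" using Sym_comp_inv[OF ux(1)] by (simp add: comp_assoc)
  then show "?g (s \<circ> u) = C s \<circ> x" by simp
qed

lemma transposition_setI: "\<forall>s\<in>S. is_transposition n s \<Longrightarrow> transposition_set n S"
  by unfold_locales blast

lemma cay_iso_imp_trans_iso:
  assumes n: "n \<ge> 3" and S: "transposition_set n S" "generates_Sym n S"
    and S': "transposition_set n S'"
    and iso: "graph_iso (Sym n) (cay_adj S) (Sym n) (cay_adj S')"
  shows "graph_iso {1..n} (trans_adj S) {1..n} (trans_adj S')"
proof -
  obtain \<phi> where "graph_isomorphism (Sym n) (cay_adj S) (Sym n) (cay_adj S') \<phi>" "\<phi> id = id"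
    using cay_iso_ex_isomorphism_fixing_id[OF iso] by blast
  then interpret cay_isomorphism_fixing_id n S S' \<phi>
    using S S' by (simp add: cay_isomorphism_fixing_id_def cay_isomorphism_fixing_id_axioms_def)
  obtain \<sigma> where "bij_betw \<sigma> {1..n} {1..n}" "\<forall>s\<in>S. moved (\<phi> s) = \<sigma> ` moved s"
    using ex_relabelling[OF n S(2)] by blast
  then show ?thesis
    using trans_graph_isomorphism_if_relabelling[OF S(1) S' bij_betw_generators]
      graph_iso_iff_ex_isomorphism by blast
qed

lemma trans_iso_imp_cay_iso:
  assumes "transposition_set n S" "transposition_set n S'"
    and "graph_iso {1..n} (trans_adj S) {1..n} (trans_adj S')"
  shows "graph_iso (Sym n) (cay_adj S) (Sym n) (cay_adj S')"
proof -
  obtain \<sigma> where "graph_isomorphism {1..n} (trans_adj S) {1..n} (trans_adj S') \<sigma>"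
    using assms(3) graph_iso_iff_ex_isomorphism by blast
  then show ?thesis
    using cay_isomorphism_map_permutation[OF assms(1,2)] graph_iso_iff_ex_isomorphism by blast
qed

lemma cay_edge_transitive_ex_automorphism:
  assumes S: "transposition_set n S" and et: "edge_transitive (Sym n) (cay_adj S)"
    and st: "s \<in> S" "t \<in> S"
  obtains \<phi> where "graph_isomorphism (Sym n) (cay_adj S) (Sym n) (cay_adj S) \<phi>" "\<phi> id = id" "\<phi> s = t"
proof -
  interpret A: transposition_set n S by fact
  have Sym: "s \<in> Sym n" "t \<in> Sym n" using A.subset_Sym st by auto
  obtain g where g: "graph_isomorphism (Sym n) (cay_adj S) (Sym n) (cay_adj S) g" "{g id, g s} = {id, t}"
    using et[unfolded edge_transitive_def graph_aut_iff_isomorphism, rule_format,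
        OF id_in_Sym Sym(1) id_in_Sym Sym(2)] st
    by auto
  show ?thesis
  proof (cases "g id = id")
    case True
    moreover have "t \<noteq> id" using A.card_moved[OF st(2)] by (auto simp: moved_def)
    ultimately have "g s = t" using g(2) by (auto simp: doubleton_eq_iff)
    then show ?thesis using that[OF g(1) True] by blast
  next
    case False
    then have "g id = t" "g s = id" using g(2) by (auto simp: doubleton_eq_iff)
    then show ?thesis
      using that[OF graph_isomorphism_comp[OF g(1) graph_isomorphism_cay_right_mult[OF Sym(2)]]]
        A.comp_self[OF st(2)] by simp
  qed
qed

lemma cay_edge_transitive_imp_trans_edge_transitive:
  assumes n: "n \<ge> 3" and S: "transposition_set n S" "generates_Sym n S"
    and et: "edge_transitive (Sym n) (cay_adj S)"
  shows "edge_transitive {1..n} (trans_adj S)"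
  unfolding edge_transitive_def
proof (intro ballI impI)
  fix a b c d assume "a \<in> {1..n}" "b \<in> {1..n}" "c \<in> {1..n}" "d \<in> {1..n}"
    and "trans_adj S a b" "trans_adj S c d"
  then have ab: "a \<noteq> b" "transpose a b \<in> S" and cd: "c \<noteq> d" "transpose c d \<in> S"
    unfolding trans_adj_def by auto
  obtain \<phi> where \<phi>: "graph_isomorphism (Sym n) (cay_adj S) (Sym n) (cay_adj S) \<phi>" "\<phi> id = id"
      "\<phi> (transpose a b) = transpose c d"
    using cay_edge_transitive_ex_automorphism[OF S(1) et ab(2) cd(2)] by blast
  then interpret cay_isomorphism_fixing_id n S S \<phi>
    using S by (simp add: cay_isomorphism_fixing_id_def cay_isomorphism_fixing_id_axioms_def)
  obtain \<sigma> where \<sigma>: "bij_betw \<sigma> {1..n} {1..n}" "\<forall>s\<in>S. moved (\<phi> s) = \<sigma> ` moved s"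
    using ex_relabelling[OF n S(2)] by blast
  then have "{\<sigma> a, \<sigma> b} = {c, d}"
    using \<phi>(3) ab cd by (metis image_empty image_insert moved_transpose)
  moreover have "graph_aut {1..n} (trans_adj S) \<sigma>"
    using trans_graph_isomorphism_if_relabelling[OF S(1) S(1) bij_betw_generators \<sigma>]
    unfolding graph_aut_iff_isomorphism .
  ultimately show "\<exists>g. graph_aut {1..n} (trans_adj S) g \<and> {g a, g b} = {c, d}" by blast
qed

lemma trans_edge_transitive_imp_cay_edge_transitive:
  assumes S: "transposition_set n S" and et: "edge_transitive {1..n} (trans_adj S)"
  shows "edge_transitive (Sym n) (cay_adj S)"
  unfolding edge_transitive_def
proof (intro ballI impI)
  interpret A: transposition_set n S by fact
  fix u v x y assume uvxy: "u \<in> Sym n" "v \<in> Sym n" "x \<in> Sym n" "y \<in> Sym n"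
    and "cay_adj S u v" "cay_adj S x y"
  then obtain s t where s: "s \<in> S" "v = s \<circ> u" and t: "t \<in> S" "y = t \<circ> x"
    unfolding cay_adj_def by blast
  obtain a b where ab: "a \<in> {1..n}" "b \<in> {1..n}" "a \<noteq> b" "s = transpose a b"
    using A.obtain_transpose[OF s(1)] by metis
  obtain c d where cd: "c \<in> {1..n}" "d \<in> {1..n}" "c \<noteq> d" "t = transpose c d"
    using A.obtain_transpose[OF t(1)] by metis
  have "trans_adj S a b" "trans_adj S c d" using ab cd s t unfolding trans_adj_def by auto
  then obtain \<sigma> where \<sigma>: "graph_isomorphism {1..n} (trans_adj S) {1..n} (trans_adj S) \<sigma>"
      "{\<sigma> a, \<sigma> b} = {c, d}"
    using et ab cd unfolding edge_transitive_def graph_aut_iff_isomorphism by blast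
  have inj: "inj_on \<sigma> {1..n}" using \<sigma>(1) unfolding graph_isomorphism_def bij_betw_def by blast
  have "map_permutation {1..n} \<sigma> s = t"
    using map_permutation_transpose[OF inj ab(1,2)] \<sigma>(2) ab cd
    by (metis doubleton_eq_iff transpose_commute)
  moreover obtain g where "graph_isomorphism (Sym n) (cay_adj S) (Sym n) (cay_adj S) g"
      "g u = x" "g (s \<circ> u) = map_permutation {1..n} \<sigma> s \<circ> x"
    using cay_automorphism_translate[OF cay_isomorphism_map_permutation[OF S S \<sigma>(1)]
        map_permutation_id'[OF inj] uvxy(1,3)] by blast
  ultimately show "\<exists>g. graph_aut (Sym n) (cay_adj S) g \<and> {g u, g v} = {x, y}"
    unfolding graph_aut_iff_isomorphism using s(2) t(2) by auto
qed

theorem theorem1: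
  fixes n :: nat
  assumes "n \<ge> 5"
  shows "(\<forall>S S'. (\<forall>s\<in>S. is_transposition n s) \<and> generates_Sym n S \<and>
            (\<forall>s\<in>S'. is_transposition n s) \<and> generates_Sym n S' \<longrightarrow>
            (graph_iso (Sym n) (cay_adj S) (Sym n) (cay_adj S') \<longleftrightarrow>
             graph_iso {1..n} (trans_adj S) {1..n} (trans_adj S')))
       \<and> (\<forall>S. (\<forall>s\<in>S. is_transposition n s) \<and> generates_Sym n S \<longrightarrow>
            (edge_transitive (Sym n) (cay_adj S) \<longleftrightarrow>
             edge_transitive {1..n} (trans_adj S)))"
proof -
  have n: "n \<ge> 3" using assms by simp
  show ?thesis
  proof (intro conjI allI impI; elim conjE)
    fix S S' assume "\<forall>s\<in>S. is_transposition n s" "generates_Sym n S"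
      "\<forall>s\<in>S'. is_transposition n s" "generates_Sym n S'"
    then show "graph_iso (Sym n) (cay_adj S) (Sym n) (cay_adj S') \<longleftrightarrow>
        graph_iso {1..n} (trans_adj S) {1..n} (trans_adj S')"
      using cay_iso_imp_trans_iso[OF n] trans_iso_imp_cay_iso transposition_setI by blast
  next
    fix S assume "\<forall>s\<in>S. is_transposition n s" "generates_Sym n S"
    then show "edge_transitive (Sym n) (cay_adj S) \<longleftrightarrow> edge_transitive {1..n} (trans_adj S)"
      using cay_edge_transitive_imp_trans_edge_transitive[OF n]
        trans_edge_transitive_imp_cay_edge_transitive transposition_setI by blast
  qed
qed

end
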